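(* The dimension of $\sigma_r(\mathcal{M}_{n,d})$ is bounded above by the optimal value of the following integer linear program in the variables $c_1,\ldots,c_d\in\mathbb{Z}$: $$\text{maximize } c_1+c_2+\cdots+c_d-1$$ subject to $$0\le c_i\le nr\ \text{ for } i\in[d],\qquad \sum_{i\in S}c_i\le\sum_{\lambda\cap S\neq\emptyset}|N_\lambda|\ \text{ for all } S\subseteq[d].$$ Here the last sum ranges over the partitions $\lambda$ of $d$ of length at most $n$ having at least one part lying in $S$.
   Context: Work over $\mathbb{C}$. Let $[d]=\{1,\ldots,d\}$. The variety $\sigma_r(\mathcal{M}_{n,d})\subset\mathbb{P}^{\binom{n+d-1}{d}-1}$ is the Zariski closure of the image of $m_{i_1\cdots i_n}=\sum_{j=1}^r\mu^{(j)}_{1i_1}\cdots\mu^{(j)}_{ni_n}$ over all $(i_1,\ldots,i_n)\in\mathbb{Z}_{\ge0}^n$ with $\sum_k i_k=d$, with $\mu^{(j)}_{k0}=1$. For a partition $\lambda$ of $d$ with at most $n$ parts, $N_\lambda$ is the set of index vectors $(i_1,\ldots,i_n)\in\mathbb{Z}_{\ge 0}^n$ whose multiset of nonzero entries equals $\lambda$. *)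

theory Defs
  imports Complex_Main "HOL-Library.Multiset" "HOL-Library.Extended_Nat"
begin

text \<open>Points of the affine space \<open>\<complex>^I\<close> (I finite) are functions vanishing outside I.\<close>
definition aff_space :: "'a set \<Rightarrow> ('a \<Rightarrow> complex) set" where
  "aff_space I = {x. \<forall>v. v \<notin> I \<longrightarrow> x v = 0}"

inductive_set polyfun :: "'a set \<Rightarrow> (('a \<Rightarrow> complex) \<Rightarrow> complex) set" for I where
  pf_const: "(\<lambda>x. c) \<in> polyfun I"
| pf_var: "v \<in> I \<Longrightarrow> (\<lambda>x. x v) \<in> polyfun I"
| pf_add: "f \<in> polyfun I \<Longrightarrow> g \<in> polyfun I \<Longrightarrow> (\<lambda>x. f x + g x) \<in> polyfun I"
| pf_mult: "f \<in> polyfun I \<Longrightarrow> g \<in> polyfun I \<Longrightarrow> (\<lambda>x. f x * g x) \<in> polyfun I"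

definition zclosed :: "'a set \<Rightarrow> ('a \<Rightarrow> complex) set \<Rightarrow> bool" where
  "zclosed I A \<longleftrightarrow> (\<exists>F \<subseteq> polyfun I. A = {x \<in> aff_space I. \<forall>f\<in>F. f x = 0})"

definition zclosure :: "'a set \<Rightarrow> ('a \<Rightarrow> complex) set \<Rightarrow> ('a \<Rightarrow> complex) set" where
  "zclosure I A = \<Inter>{C. zclosed I C \<and> A \<subseteq> C}"

definition zirreducible :: "'a set \<Rightarrow> ('a \<Rightarrow> complex) set \<Rightarrow> bool" where
  "zirreducible I A \<longleftrightarrow> zclosed I A \<and> A \<noteq> {} \<and>
     (\<forall>B C. zclosed I B \<longrightarrow> zclosed I C \<longrightarrow> A \<subseteq> B \<union> C \<longrightarrow> A \<subseteq> B \<or> A \<subseteq> C)"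

definition zdim :: "'a set \<Rightarrow> ('a \<Rightarrow> complex) set \<Rightarrow> enat" where
  "zdim I V = Sup {enat k | k. \<exists>Z :: nat \<Rightarrow> ('a \<Rightarrow> complex) set.
      (\<forall>i\<le>k. zirreducible I (Z i) \<and> Z i \<subseteq> V) \<and> (\<forall>i<k. Z i \<subset> Z (Suc i))}"

definition idx_set :: "nat \<Rightarrow> nat \<Rightarrow> nat list set" where
  "idx_set n d = {i. length i = n \<and> sum_list i = d}"

text \<open>Parametrization: \<open>mu j k i\<close> is \<mu>^{(j)}_{k i} (j \<in> [r], k \<in> [n], i \<in> [d]);
  the convention \<mu>^{(j)}_{k0} = 1 is built in.\<close>
definition mu_val :: "(nat \<Rightarrow> nat \<Rightarrow> nat \<Rightarrow> complex) \<Rightarrow> nat \<Rightarrow> nat \<Rightarrow> nat \<Rightarrow> complex" where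
  "mu_val mu j k i = (if i = 0 then 1 else mu j k i)"

definition sigma_map :: "nat \<Rightarrow> nat \<Rightarrow> nat \<Rightarrow> (nat \<Rightarrow> nat \<Rightarrow> nat \<Rightarrow> complex) \<Rightarrow> nat list \<Rightarrow> complex" where
  "sigma_map n d r mu idx =
     (if idx \<in> idx_set n d
      then (\<Sum>j=1..r. \<Prod>k=1..n. mu_val mu j k (idx ! (k - 1)))
      else 0)"

text \<open>Affine cone over sigma_r(M_{n,d}): Zariski closure of the image of the parametrization
  in the affine space with coordinates indexed by idx_set n d.\<close>
definition sigma_cone :: "nat \<Rightarrow> nat \<Rightarrow> nat \<Rightarrow> (nat list \<Rightarrow> complex) set" where
  "sigma_cone n d r = zclosure (idx_set n d) (range (sigma_map n d r))"

text \<open>Projective dimension of sigma_r(M_{n,d}) = affine dimension of its cone minus 1.\<close>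
definition sigma_dim :: "nat \<Rightarrow> nat \<Rightarrow> nat \<Rightarrow> int" where
  "sigma_dim n d r = int (the_enat (zdim (idx_set n d) (sigma_cone n d r))) - 1"

definition partitions_le :: "nat \<Rightarrow> nat \<Rightarrow> nat multiset set" where
  "partitions_le n d = {lam. (\<forall>p \<in># lam. p > 0) \<and> sum_mset lam = d \<and> size lam \<le> n}"

definition N_lam :: "nat \<Rightarrow> nat \<Rightarrow> nat multiset \<Rightarrow> nat list set" where
  "N_lam n d lam = {i \<in> idx_set n d. mset (filter (\<lambda>x. x \<noteq> 0) i) = lam}"

definition ilp_feasible :: "nat \<Rightarrow> nat \<Rightarrow> nat \<Rightarrow> (nat \<Rightarrow> int) \<Rightarrow> bool" where
  "ilp_feasible n d r c \<longleftrightarrow>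
     (\<forall>i. i \<notin> {1..d} \<longrightarrow> c i = 0) \<and>
     (\<forall>i\<in>{1..d}. 0 \<le> c i \<and> c i \<le> int (n * r)) \<and>
     (\<forall>S \<subseteq> {1..d}. (\<Sum>i\<in>S. c i) \<le>
        (\<Sum>lam \<in> {lam \<in> partitions_le n d. \<exists>p \<in># lam. p \<in> S}. int (card (N_lam n d lam))))"

definition ilp_opt :: "nat \<Rightarrow> nat \<Rightarrow> nat \<Rightarrow> int" where
  "ilp_opt n d r = Max {(\<Sum>i=1..d. c i) - 1 | c. ilp_feasible n d r c}"

end

(*
  Fix W \<subseteq> [d]. A coordinate m_t whose index vector t has no entry in W is a sum of
  products of n parameters \<mu>^{(j)}_{ki} with i \<notin> W, so the parametrisation factors through
  the nr|[d] - W| such parameters together with the coordinates m_t for t meeting W.  A variety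
  parametrised polynomially by N functions has dimension at most N: a chain of irreducible closed
  subsets of length L yields t^L polynomials of degree O(t) that are linearly independent on the
  variety, while their pull-backs lie in a space of monomials of dimension O(t^N).

  It remains to choose W.  Take an optimal solution c of the program.  The right-hand side
  S \<mapsto> |{t : t meets S}| is submodular, so the sets S on which the constraint for c is tight
  are closed under union.  By optimality every i with c_i < nr lies in a tight set, and the union W
  of these sets satisfies  \<Sum>c_i = nr|[d] - W| + |{t : t meets W}|.
*)

theory Submission
  imports Defs "HOL-Library.Function_Algebras" "HOL-Library.FuncSet"
begin

section \<open>Linear independence of complex-valued functions\<close>

interpretation fun_space: vector_space "\<lambda>(c::complex) (f::'a \<Rightarrow> complex) x. c * f x"
  by unfold_locales (auto simp: fun_eq_iff algebra_simps)

definition lin_indep_on :: "'a set \<Rightarrow> nat \<Rightarrow> (nat \<Rightarrow> 'a \<Rightarrow> complex) \<Rightarrow> bool" where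
  "lin_indep_on Z m fs \<longleftrightarrow> (\<forall>a. (\<forall>x\<in>Z. (\<Sum>i<m. a i * fs i x) = 0) \<longrightarrow> (\<forall>i<m. a i = 0))"

lemma sum_fun_apply: "(\<Sum>v\<in>T. (f v :: 'a \<Rightarrow> 'b::comm_monoid_add)) x = (\<Sum>v\<in>T. f v x)"
  by (induct T rule: infinite_finite_induct) auto

lemma lin_indep_on_inj:
  assumes "lin_indep_on UNIV m gs"
  shows "inj_on gs {..<m}"
proof (rule inj_onI, rule ccontr)
  fix i j assume ij: "i \<in> {..<m}" "j \<in> {..<m}" "gs i = gs j" "i \<noteq> j"
  define a where "a = (\<lambda>k. if k = i then (1::complex) else if k = j then -1 else 0)"
  have "(\<Sum>k<m. a k * gs k x) = (\<Sum>k\<in>{i,j}. a k * gs k x)" for x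
    by (rule sum.mono_neutral_right) (use ij in \<open>auto simp: a_def\<close>)
  also have "(\<Sum>k\<in>{i,j}. a k * gs k x) = 0" for x
    using ij by (simp add: a_def)
  finally have "a i = 0" using assms ij unfolding lin_indep_on_def by blast
  then show False by (simp add: a_def)
qed

lemma lin_indep_on_independent:
  assumes indep: "lin_indep_on UNIV m gs"
  shows "fun_space.independent (gs ` {..<m})"
proof
  assume "fun_space.dependent (gs ` {..<m})"
  then obtain T u where T: "finite T" "T \<subseteq> gs ` {..<m}"
    "(\<Sum>v\<in>T. (\<lambda>x. u v * v x)) = 0" "\<exists>v\<in>T. u v \<noteq> 0"
    unfolding fun_space.dependent_explicit by blast
  define a where "a = (\<lambda>k. if gs k \<in> T then u (gs k) else 0)"
  have "(\<Sum>k<m. a k * gs k x) = 0" for x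
  proof -
    have "(\<Sum>k<m. a k * gs k x) = (\<Sum>k\<in>{k\<in>{..<m}. gs k \<in> T}. u (gs k) * gs k x)"
      by (rule sum.mono_neutral_cong_right) (auto simp: a_def)
    also have "\<dots> = (\<Sum>v\<in>gs ` {k\<in>{..<m}. gs k \<in> T}. u v * v x)"
      by (rule sum.reindex[symmetric, unfolded comp_def])
        (rule inj_on_subset[OF lin_indep_on_inj[OF indep]], auto)
    also have "gs ` {k\<in>{..<m}. gs k \<in> T} = T" using T(2) by auto
    also have "(\<Sum>v\<in>T. u v * v x) = 0"
      using fun_cong[OF T(3), of x] by (simp add: sum_fun_apply)
    finally show ?thesis .
  qed
  then have "\<forall>k<m. a k = 0" using indep by (simp add: lin_indep_on_def)
  moreover obtain v where "v \<in> T" "u v \<noteq> 0" using T(4) by blast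
  moreover obtain k where "k < m" "v = gs k" using T(2) \<open>v \<in> T\<close> by auto
  ultimately show False by (auto simp: a_def)
qed

lemma lin_indep_on_card_le:
  assumes "finite G" and "\<And>i. i < m \<Longrightarrow> gs i \<in> fun_space.span G"
    and indep: "lin_indep_on UNIV m gs"
  shows "m \<le> card G"
proof -
  have "gs ` {..<m} \<subseteq> fun_space.span G" using assms(2) by auto
  then have "card (gs ` {..<m}) \<le> card G"
    using fun_space.independent_span_bound[OF assms(1) lin_indep_on_independent[OF indep]] by blast
  with card_image[OF lin_indep_on_inj[OF indep]] show ?thesis by simp
qed

lemma fun_space_span_mult:
  assumes f: "f \<in> fun_space.span A" and g: "g \<in> fun_space.span B"
    and AB: "\<And>a b. a \<in> A \<Longrightarrow> b \<in> B \<Longrightarrow> (\<lambda>x. a x * b x) \<in> fun_space.span C"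
  shows "(\<lambda>x. f x * g x) \<in> fun_space.span C"
proof -
  have left: "(\<lambda>x. f x * b x) \<in> fun_space.span C" if "b \<in> B" for b
    using f
  proof (induction rule: fun_space.span_induct_alt)
    case base
    show ?case using fun_space.span_zero by (simp add: zero_fun_def)
  next
    case (step c a h)
    have "(\<lambda>x. (c * a x + h x) * b x) = (\<lambda>x. c * (a x * b x)) + (\<lambda>x. h x * b x)"
      by (simp add: fun_eq_iff algebra_simps)
    also have "\<dots> \<in> fun_space.span C"
      using step AB[OF _ that] by (intro fun_space.span_add fun_space.span_scale) auto
    finally show ?case by (simp add: plus_fun_def)
  qed
  from g show ?thesis
  proof (induction rule: fun_space.span_induct_alt)
    case base
    show ?case using fun_space.span_zero by (simp add: zero_fun_def)
  next
    case (step c b h)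
    have "(\<lambda>x. f x * (c * b x + h x)) = (\<lambda>x. c * (f x * b x)) + (\<lambda>x. f x * h x)"
      by (simp add: fun_eq_iff algebra_simps)
    also have "\<dots> \<in> fun_space.span C"
      using step left by (intro fun_space.span_add fun_space.span_scale) auto
    finally show ?case by (simp add: plus_fun_def)
  qed
qed

section \<open>Monomials in a family of functions\<close>

text \<open>The bound D is on each exponent separately, not on the total degree.\<close>
definition monomials :: "('v \<Rightarrow> 'p \<Rightarrow> complex) \<Rightarrow> 'v set \<Rightarrow> nat \<Rightarrow> ('p \<Rightarrow> complex) set" where
  "monomials y X D = (\<lambda>\<alpha> p. \<Prod>v\<in>X. y v p ^ \<alpha> v) ` (X \<rightarrow>\<^sub>E {0..D})"

lemma finite_monomials: "finite X \<Longrightarrow> finite (monomials y X D)"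
  unfolding monomials_def by (intro finite_imageI finite_PiE) auto

lemma card_monomials_le: "finite X \<Longrightarrow> card (monomials y X D) \<le> (D + 1) ^ card X"
  unfolding monomials_def using card_image_le[OF finite_PiE, of X "\<lambda>_. {0..D}"]
  by (simp add: card_PiE)

lemma monomials_mono: "D \<le> D' \<Longrightarrow> monomials y X D \<subseteq> monomials y X D'"
  unfolding monomials_def by (intro image_mono PiE_mono) auto

lemma one_in_monomials: "(\<lambda>p. 1) \<in> monomials y X D"
proof -
  have "(\<lambda>p. 1) = (\<lambda>p. \<Prod>v\<in>X. y v p ^ (\<lambda>v\<in>X. 0::nat) v)" by simp
  moreover have "(\<lambda>v\<in>X. 0::nat) \<in> X \<rightarrow>\<^sub>E {0..D}" by auto
  ultimately show ?thesis unfolding monomials_def by blast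
qed

lemma generator_in_monomials:
  assumes "finite X" "v \<in> X" "1 \<le> D"
  shows "y v \<in> monomials y X D"
proof -
  define \<alpha> where "\<alpha> = (\<lambda>u\<in>X. if u = v then 1 else (0::nat))"
  have "(\<Prod>u\<in>X. y u p ^ \<alpha> u) = (\<Prod>u\<in>X. if u = v then y u p else 1)" for p
    by (rule prod.cong) (auto simp: \<alpha>_def)
  then have "y v = (\<lambda>p. \<Prod>u\<in>X. y u p ^ \<alpha> u)"
    using assms(1,2) by (simp add: prod.delta fun_eq_iff)
  moreover have "\<alpha> \<in> X \<rightarrow>\<^sub>E {0..D}" using assms(3) by (auto simp: \<alpha>_def)
  ultimately show ?thesis unfolding monomials_def by blast
qed

lemma mult_monomials:
  assumes "f \<in> monomials y X D" "g \<in> monomials y X D'"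
  shows "(\<lambda>p. f p * g p) \<in> monomials y X (D + D')"
proof -
  obtain \<alpha> \<beta> where \<alpha>: "\<alpha> \<in> X \<rightarrow>\<^sub>E {0..D}" "f = (\<lambda>p. \<Prod>v\<in>X. y v p ^ \<alpha> v)"
    and \<beta>: "\<beta> \<in> X \<rightarrow>\<^sub>E {0..D'}" "g = (\<lambda>p. \<Prod>v\<in>X. y v p ^ \<beta> v)"
    using assms unfolding monomials_def by blast
  define \<gamma> where "\<gamma> = (\<lambda>v\<in>X. \<alpha> v + \<beta> v)"
  have "\<gamma> \<in> X \<rightarrow>\<^sub>E {0..D + D'}" using \<alpha>(1) \<beta>(1) by (force simp: \<gamma>_def PiE_iff intro: add_mono)
  moreover have "(\<lambda>p. f p * g p) = (\<lambda>p. \<Prod>v\<in>X. y v p ^ \<gamma> v)"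
    by (auto simp: \<alpha>(2) \<beta>(2) \<gamma>_def fun_eq_iff power_add prod.distrib[symmetric] intro!: prod.cong)
  ultimately show ?thesis unfolding monomials_def by blast
qed

lemma prod_monomials:
  assumes "finite A" "\<And>a. a \<in> A \<Longrightarrow> f a \<in> monomials y X D"
  shows "(\<lambda>p. \<Prod>a\<in>A. f a p) \<in> monomials y X (card A * D)"
  using assms
proof (induction A rule: finite_induct)
  case empty
  show ?case by (simp add: one_in_monomials)
next
  case (insert a A)
  then have "(\<lambda>p. f a p * (\<Prod>a\<in>A. f a p)) \<in> monomials y X (D + card A * D)"
    by (intro mult_monomials) auto
  with insert show ?case by simp
qed

lemma span_monomials_mult:
  assumes "f \<in> fun_space.span (monomials y X D)" "g \<in> fun_space.span (monomials y X D')"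
  shows "(\<lambda>p. f p * g p) \<in> fun_space.span (monomials y X (D + D'))"
  using assms by (rule fun_space_span_mult) (auto intro: fun_space.span_base mult_monomials)

section \<open>Polynomial functions of bounded degree and Zariski-closed sets\<close>

inductive poly_deg_le :: "'a set \<Rightarrow> nat \<Rightarrow> (('a \<Rightarrow> complex) \<Rightarrow> complex) \<Rightarrow> bool" for I where
  const: "poly_deg_le I k (\<lambda>x. c)"
| var: "v \<in> I \<Longrightarrow> 1 \<le> k \<Longrightarrow> poly_deg_le I k (\<lambda>x. x v)"
| add: "poly_deg_le I k f \<Longrightarrow> poly_deg_le I k g \<Longrightarrow> poly_deg_le I k (\<lambda>x. f x + g x)"
| mult: "poly_deg_le I k f \<Longrightarrow> poly_deg_le I l g \<Longrightarrow> poly_deg_le I (k + l) (\<lambda>x. f x * g x)"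

lemma poly_deg_le_mono: "poly_deg_le I k f \<Longrightarrow> k \<le> k' \<Longrightarrow> poly_deg_le I k' f"
proof (induction arbitrary: k' rule: poly_deg_le.induct)
  case (mult k f l g)
  then have "poly_deg_le I ((k' - l) + l) (\<lambda>x. f x * g x)"
    by (intro poly_deg_le.mult) auto
  with mult.prems show ?case by simp
qed (auto intro: poly_deg_le.intros)

lemma polyfun_iff_poly_deg_le: "f \<in> polyfun I \<longleftrightarrow> (\<exists>k. poly_deg_le I k f)"
proof
  assume "f \<in> polyfun I"
  then show "\<exists>k. poly_deg_le I k f"
  proof (induction rule: polyfun.induct)
    case (pf_add f g)
    then obtain k l where "poly_deg_le I k f" "poly_deg_le I l g" by blast
    then have "poly_deg_le I (max k l) f" "poly_deg_le I (max k l) g"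
      by (auto intro: poly_deg_le_mono)
    then show ?case by (blast intro: poly_deg_le.add)
  qed (auto intro: poly_deg_le.intros)
next
  assume "\<exists>k. poly_deg_le I k f"
  then obtain k where "poly_deg_le I k f" by blast
  then show "f \<in> polyfun I"
    by (induction rule: poly_deg_le.induct) (auto intro: polyfun.intros)
qed

lemma poly_deg_le_lin_comb:
  "(\<And>i. i < (m::nat) \<Longrightarrow> poly_deg_le I k (fs i)) \<Longrightarrow> poly_deg_le I k (\<lambda>x. \<Sum>i<m. a i * fs i x)"
proof (induction m)
  case 0
  show ?case by (simp add: poly_deg_le.const)
next
  case (Suc m)
  have "poly_deg_le I (0 + k) (\<lambda>x. a m * fs m x)"
    using Suc.prems by (intro poly_deg_le.mult poly_deg_le.const) auto
  with Suc show ?case by (auto intro: poly_deg_le.add)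
qed

lemma poly_deg_le_compose_span:
  assumes "poly_deg_le I k f"
    and coords: "\<And>i. i \<in> I \<Longrightarrow> (\<lambda>p. \<sigma> p i) \<in> fun_space.span (monomials y X e)"
  shows "(\<lambda>p. f (\<sigma> p)) \<in> fun_space.span (monomials y X (e * k))"
  using assms(1)
proof (induction rule: poly_deg_le.induct)
  case (const k c)
  show ?case
    using fun_space.span_scale[OF fun_space.span_base[OF one_in_monomials], of c] by simp
next
  case (var v k)
  have "e \<le> e * k" using var.hyps(2) by simp
  then show ?case
    using coords[OF var.hyps(1)] fun_space.span_mono[OF monomials_mono] by blast
next
  case (add k f g)
  then show ?case using fun_space.span_add by (fastforce simp: plus_fun_def)
next
  case (mult k f l g)
  then show ?case using span_monomials_mult by (fastforce simp: distrib_left)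
qed

lemma zclosed_zero_set: "h \<in> polyfun I \<Longrightarrow> zclosed I {x \<in> aff_space I. h x = 0}"
  unfolding zclosed_def by (intro exI[of _ "{h}"]) auto

lemma zclosure_subset_zero_set:
  assumes "h \<in> polyfun I" "A \<subseteq> aff_space I" "\<And>x. x \<in> A \<Longrightarrow> h x = 0"
  shows "zclosure I A \<subseteq> {x \<in> aff_space I. h x = 0}"
  unfolding zclosure_def using assms zclosed_zero_set[OF assms(1)] by (intro Inter_lower) auto

lemma zclosed_psubset_separating_poly:
  assumes "zclosed I Z" "Z \<subset> Z'" "zclosed I Z'"
  shows "\<exists>e g. poly_deg_le I e g \<and> (\<forall>x\<in>Z. g x = 0) \<and> (\<exists>x\<in>Z'. g x \<noteq> 0)"
proof -
  obtain F where F: "F \<subseteq> polyfun I" "Z = {x \<in> aff_space I. \<forall>f\<in>F. f x = 0}"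
    using assms(1) unfolding zclosed_def by blast
  have "Z' \<subseteq> aff_space I" using assms(3) unfolding zclosed_def by blast
  then obtain x where "x \<in> Z'" "x \<notin> Z" "x \<in> aff_space I" using assms(2) by blast
  then obtain f where "f \<in> F" "f x \<noteq> 0" using F(2) by blast
  moreover obtain e where "poly_deg_le I e f" using F(1) \<open>f \<in> F\<close> polyfun_iff_poly_deg_le by blast
  ultimately show ?thesis using \<open>x \<in> Z'\<close> F(2) by blast
qed

lemma zirreducible_vanishing_product:
  assumes "zirreducible I Z" "g \<in> polyfun I" "h \<in> polyfun I" "\<And>x. x \<in> Z \<Longrightarrow> g x * h x = 0"
  shows "(\<forall>x\<in>Z. g x = 0) \<or> (\<forall>x\<in>Z. h x = 0)"
proof -
  have "Z \<subseteq> aff_space I" using assms(1) unfolding zirreducible_def zclosed_def by blast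
  then have "Z \<subseteq> {x \<in> aff_space I. g x = 0} \<union> {x \<in> aff_space I. h x = 0}" using assms(4) by auto
  then show ?thesis
    using assms(1) zclosed_zero_set[OF assms(2)] zclosed_zero_set[OF assms(3)]
    unfolding zirreducible_def by blast
qed

section \<open>Hilbert functions and dimension\<close>

definition hilbert_ge :: "'a set \<Rightarrow> ('a \<Rightarrow> complex) set \<Rightarrow> nat \<Rightarrow> nat \<Rightarrow> bool" where
  "hilbert_ge I Z k m \<longleftrightarrow> (\<exists>fs. (\<forall>i<m. poly_deg_le I k (fs i)) \<and> lin_indep_on Z m fs)"

lemma hilbert_ge_zero: "hilbert_ge I Z k 0"
  unfolding hilbert_ge_def lin_indep_on_def by auto

lemma hilbert_ge_one: "Z \<noteq> {} \<Longrightarrow> hilbert_ge I Z 0 1"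
  unfolding hilbert_ge_def lin_indep_on_def
  by (intro exI[of _ "\<lambda>_ _. 1"]) (auto intro: poly_deg_le.const)

lemma hilbert_ge_mono_set: "hilbert_ge I Z k m \<Longrightarrow> Z \<subseteq> V \<Longrightarrow> hilbert_ge I V k m"
  unfolding hilbert_ge_def lin_indep_on_def by blast

lemma sum_lessThan_add: "(\<Sum>i<m + (m'::nat). f i) = (\<Sum>i<m. f i) + (\<Sum>j<m'. f (m + j))"
  by (induction m') (auto simp: add.assoc)

lemma hilbert_ge_extend:
  assumes Z: "Z \<subseteq> Z'" and irr: "zirreducible I Z'"
    and g: "poly_deg_le I e g" "\<forall>x\<in>Z. g x = 0" "\<exists>x\<in>Z'. g x \<noteq> 0"
    and "hilbert_ge I Z k m" and "hilbert_ge I Z' k' m'"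
  shows "hilbert_ge I Z' (max k (k' + e)) (m + m')"
proof -
  obtain fs where fs: "\<forall>i<m. poly_deg_le I k (fs i)" "lin_indep_on Z m fs"
    using \<open>hilbert_ge I Z k m\<close> unfolding hilbert_ge_def by blast
  obtain hs where hs: "\<forall>i<m'. poly_deg_le I k' (hs i)" "lin_indep_on Z' m' hs"
    using \<open>hilbert_ge I Z' k' m'\<close> unfolding hilbert_ge_def by blast
  define F where "F = (\<lambda>i. if i < m then fs i else (\<lambda>x. g x * hs (i - m) x))"
  have "poly_deg_le I (max k (k' + e)) (F i)" if "i < m + m'" for i
  proof (cases "i < m")
    case True
    then show ?thesis using fs(1) by (auto simp: F_def intro: poly_deg_le_mono)
  next
    case False
    then have "poly_deg_le I (e + k') (F i)"
      using that hs(1) g(1) by (auto simp: F_def intro: poly_deg_le.mult)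
    then show ?thesis by (rule poly_deg_le_mono) simp
  qed
  moreover have "lin_indep_on Z' (m + m') F"
    unfolding lin_indep_on_def
  proof (rule allI, rule impI)
    fix a assume a: "\<forall>x\<in>Z'. (\<Sum>i<m + m'. a i * F i x) = 0"
    define H where "H = (\<lambda>x. \<Sum>j<m'. a (m + j) * hs j x)"
    \<comment> \<open>On Z only the first block survives; on Z' the rest is g * H, and g does not vanish
      identically on the irreducible Z', so H does.\<close>
    have split: "(\<Sum>i<m + m'. a i * F i x) = (\<Sum>i<m. a i * fs i x) + g x * H x" for x
      unfolding sum_lessThan_add H_def by (auto simp: F_def sum_distrib_left algebra_simps)
    have "\<forall>x\<in>Z. (\<Sum>i<m. a i * fs i x) = 0" using a Z g(2) split by fastforce
    then have a_low: "\<forall>i<m. a i = 0" using fs(2) unfolding lin_indep_on_def by blast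
    have "\<forall>x\<in>Z'. g x * H x = 0" using a split a_low by simp
    moreover have "H \<in> polyfun I"
      unfolding H_def polyfun_iff_poly_deg_le using hs(1) by (intro exI poly_deg_le_lin_comb) auto
    moreover have "g \<in> polyfun I" using g(1) polyfun_iff_poly_deg_le by blast
    ultimately have "\<forall>x\<in>Z'. H x = 0"
      using zirreducible_vanishing_product[OF irr] g(3) by blast
    then have "\<forall>j<m'. a (m + j) = 0"
      using spec[OF hs(2)[unfolded lin_indep_on_def], of "\<lambda>j. a (m + j)"] by (simp add: H_def)
    with a_low show "\<forall>i<m + m'. a i = 0"
      by (metis add_diff_inverse_nat nat_add_left_cancel_less)
  qed
  ultimately show ?thesis unfolding hilbert_ge_def by blast
qed

lemma hilbert_ge_extend_iter:
  assumes "Z \<subseteq> Z'" "zirreducible I Z'"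
    and "poly_deg_le I e g" "\<forall>x\<in>Z. g x = 0" "\<exists>x\<in>Z'. g x \<noteq> 0"
    and "hilbert_ge I Z k m"
  shows "hilbert_ge I Z' (k + s * e) (s * m)"
proof (induction s)
  case 0
  show ?case by (simp add: hilbert_ge_zero)
next
  case (Suc s)
  have "hilbert_ge I Z' (max k (k + s * e + e)) (m + s * m)"
    using assms Suc by (rule hilbert_ge_extend)
  then show ?case by (simp add: algebra_simps)
qed

lemma hilbert_ge_chain:
  assumes chain: "\<And>i. i \<le> L \<Longrightarrow> zirreducible I (Z i) \<and> Z i \<subseteq> V" "\<And>i. i < L \<Longrightarrow> Z i \<subset> Z (Suc i)"
  obtains K where "\<And>t. hilbert_ge I V (K * t) (t ^ L)"
proof -
  have "\<exists>K. \<forall>t. hilbert_ge I (Z j) (K * t) (t ^ j)" if "j \<le> L" for j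
    using that
  proof (induction j)
    case 0
    have "Z 0 \<noteq> {}" using chain(1) unfolding zirreducible_def by auto
    then show ?case using hilbert_ge_one by (intro exI[of _ 0]) simp
  next
    case (Suc j)
    then obtain K where K: "\<And>t. hilbert_ge I (Z j) (K * t) (t ^ j)" by auto
    have irr: "zirreducible I (Z j)" "zirreducible I (Z (Suc j))" using chain(1) Suc.prems by auto
    have psub: "Z j \<subset> Z (Suc j)" using chain(2) Suc.prems by auto
    have closed: "zclosed I (Z j)" "zclosed I (Z (Suc j))" using irr unfolding zirreducible_def by auto
    obtain e g where g: "poly_deg_le I e g" "\<forall>x\<in>Z j. g x = 0" "\<exists>x\<in>Z (Suc j). g x \<noteq> 0"
      using zclosed_psubset_separating_poly[OF closed(1) psub closed(2)] by blast
    have "hilbert_ge I (Z (Suc j)) ((K + e) * t) (t ^ Suc j)" for t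
      using hilbert_ge_extend_iter[OF psubset_imp_subset[OF psub] irr(2) g K[of t], where s = t]
      by (simp add: algebra_simps)
    then show ?case by blast
  qed
  then obtain K where "\<And>t. hilbert_ge I (Z L) (K * t) (t ^ L)" by blast
  moreover have "Z L \<subseteq> V" using chain(1) by simp
  ultimately show ?thesis using that hilbert_ge_mono_set by blast
qed

lemma hilbert_ge_zclosure_image_le:
  assumes X: "finite X" and image: "range \<sigma> \<subseteq> aff_space I"
    and coords: "\<And>i. i \<in> I \<Longrightarrow> (\<lambda>p. \<sigma> p i) \<in> fun_space.span (monomials y X e)"
    and "hilbert_ge I (zclosure I (range \<sigma>)) k m"
  shows "m \<le> (e * k + 1) ^ card X"
proof -
  obtain fs where fs: "\<forall>i<m. poly_deg_le I k (fs i)" "lin_indep_on (zclosure I (range \<sigma>)) m fs"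
    using assms(4) unfolding hilbert_ge_def by blast
  have "lin_indep_on UNIV m (\<lambda>i p. fs i (\<sigma> p))"
    unfolding lin_indep_on_def
  proof (rule allI, rule impI)
    fix a assume a: "\<forall>p\<in>UNIV. (\<Sum>i<m. a i * fs i (\<sigma> p)) = 0"
    have "(\<lambda>x. \<Sum>i<m. a i * fs i x) \<in> polyfun I"
      unfolding polyfun_iff_poly_deg_le using fs(1) by (intro exI poly_deg_le_lin_comb) auto
    then have "zclosure I (range \<sigma>) \<subseteq> {x \<in> aff_space I. (\<Sum>i<m. a i * fs i x) = 0}"
      using image a by (intro zclosure_subset_zero_set) auto
    then show "\<forall>i<m. a i = 0" using fs(2) unfolding lin_indep_on_def by blast
  qed
  moreover have "(\<lambda>p. fs i (\<sigma> p)) \<in> fun_space.span (monomials y X (e * k))" if "i < m" for i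
    using fs(1) that coords by (blast intro: poly_deg_le_compose_span)
  ultimately have "m \<le> card (monomials y X (e * k))"
    using finite_monomials[OF X] by (intro lin_indep_on_card_le) auto
  also have "\<dots> \<le> (e * k + 1) ^ card X" using X by (rule card_monomials_le)
  finally show ?thesis .
qed

lemma power_le_linear_power_imp_le:
  fixes A L N :: nat
  assumes bound: "\<And>t. t ^ L \<le> (A * t + 1) ^ N"
  shows "L \<le> N"
proof (rule ccontr)
  assume "\<not> L \<le> N"
  define t where "t = (A + 1) ^ N + 1"
  have "t ^ Suc N \<le> t ^ L" using \<open>\<not> L \<le> N\<close> by (intro power_increasing) (auto simp: t_def)
  also have "\<dots> \<le> (A * t + 1) ^ N" by (rule bound)
  also have "\<dots> \<le> ((A + 1) * t) ^ N" by (intro power_mono) (auto simp: t_def)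
  also have "\<dots> = (A + 1) ^ N * t ^ N" by (rule power_mult_distrib)
  also have "\<dots> < t ^ Suc N" by (simp add: t_def)
  finally show False by simp
qed

lemma zdim_le_enat:
  assumes "\<And>L Z. \<forall>i\<le>L. zirreducible I (Z i) \<and> Z i \<subseteq> V \<Longrightarrow> \<forall>i<L. Z i \<subset> Z (Suc i) \<Longrightarrow> L \<le> N"
  shows "zdim I V \<le> enat N"
  unfolding zdim_def using assms by (auto intro!: Sup_least)

lemma zdim_zclosure_image_le:
  assumes X: "finite X" and image: "range \<sigma> \<subseteq> aff_space I"
    and coords: "\<And>i. i \<in> I \<Longrightarrow> (\<lambda>p. \<sigma> p i) \<in> fun_space.span (monomials y X e)"
  shows "zdim I (zclosure I (range \<sigma>)) \<le> enat (card X)"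
proof (rule zdim_le_enat)
  fix L Z
  assume "\<forall>i\<le>L. zirreducible I (Z i) \<and> Z i \<subseteq> zclosure I (range \<sigma>)" "\<forall>i<L. Z i \<subset> Z (Suc i)"
  then obtain K where "\<And>t. hilbert_ge I (zclosure I (range \<sigma>)) (K * t) (t ^ L)"
    using hilbert_ge_chain by metis
  then have "t ^ L \<le> (e * K * t + 1) ^ card X" for t
    using hilbert_ge_zclosure_image_le[OF X image coords] by (simp add: mult.assoc)
  then show "L \<le> card X" by (rule power_le_linear_power_imp_le)
qed

section \<open>Factoring the parametrisation of sigma_r\<close>

definition idx_meeting :: "nat \<Rightarrow> nat \<Rightarrow> nat set \<Rightarrow> nat list set" where
  "idx_meeting n d S = {t \<in> idx_set n d. \<exists>x\<in>set t. x \<in> S}"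

definition sigma_factor_vars :: "nat \<Rightarrow> nat \<Rightarrow> nat \<Rightarrow> nat set \<Rightarrow> ((nat \<times> nat \<times> nat) + nat list) set" where
  "sigma_factor_vars n d r W = ({1..r} \<times> {1..n} \<times> ({1..d} - W)) <+> idx_meeting n d W"

definition sigma_factor_gen ::
    "nat \<Rightarrow> nat \<Rightarrow> nat \<Rightarrow> (nat \<times> nat \<times> nat) + nat list \<Rightarrow> (nat \<Rightarrow> nat \<Rightarrow> nat \<Rightarrow> complex) \<Rightarrow> complex" where
  "sigma_factor_gen n d r = case_sum (\<lambda>(j, k, i) \<mu>. \<mu> j k i) (\<lambda>t \<mu>. sigma_map n d r \<mu> t)"

lemma finite_idx_set: "finite (idx_set n d)"
proof (rule finite_subset)
  show "idx_set n d \<subseteq> {xs. set xs \<subseteq> {0..d} \<and> length xs = n}"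
    by (auto simp: idx_set_def member_le_sum_list)
qed (rule finite_lists_length_eq, simp)

lemma finite_idx_meeting: "finite (idx_meeting n d S)"
  using finite_idx_set by (simp add: idx_meeting_def)

lemma card_sigma_factor_vars:
  "card (sigma_factor_vars n d r W) = n * r * card ({1..d} - W) + card (idx_meeting n d W)"
  by (simp add: sigma_factor_vars_def card_Plus finite_idx_meeting card_cartesian_product)

lemma range_sigma_map_subset: "range (sigma_map n d r) \<subseteq> aff_space (idx_set n d)"
  by (auto simp: aff_space_def sigma_map_def)

lemma sigma_map_coord_in_span:
  assumes "1 \<le> n" and t: "t \<in> idx_set n d"
  shows "(\<lambda>\<mu>. sigma_map n d r \<mu> t)
    \<in> fun_space.span (monomials (sigma_factor_gen n d r) (sigma_factor_vars n d r W) n)"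
    (is "_ \<in> fun_space.span (monomials ?y ?X n)")
proof (cases "t \<in> idx_meeting n d W")
  case True
  then have "?y (Inr t) \<in> monomials ?y ?X n"
    using assms(1) by (intro generator_in_monomials)
      (auto simp: sigma_factor_vars_def finite_idx_meeting)
  then show ?thesis by (auto simp: sigma_factor_gen_def intro: fun_space.span_base)
next
  case False
  have factor: "(\<lambda>\<mu>. mu_val \<mu> j k (t ! (k - 1))) \<in> monomials ?y ?X 1"
    if "j \<in> {1..r}" "k \<in> {1..n}" for j k
  proof (cases "t ! (k - 1) = 0")
    case True
    then show ?thesis using one_in_monomials by (simp add: mu_val_def)
  next
    case nonzero: False
    have "t ! (k - 1) \<in> set t" using t that by (auto simp: idx_set_def)
    then have "t ! (k - 1) \<le> d" "t ! (k - 1) \<notin> W"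
      using t False by (auto simp: idx_set_def idx_meeting_def member_le_sum_list)
    with nonzero that have "Inl (j, k, t ! (k - 1)) \<in> ?X"
      by (auto simp: sigma_factor_vars_def)
    then have "?y (Inl (j, k, t ! (k - 1))) \<in> monomials ?y ?X 1"
      by (intro generator_in_monomials) (auto simp: sigma_factor_vars_def finite_idx_meeting)
    with nonzero show ?thesis by (simp add: mu_val_def sigma_factor_gen_def)
  qed
  have "(\<lambda>\<mu>. \<Prod>k\<in>{1..n}. mu_val \<mu> j k (t ! (k - 1))) \<in> fun_space.span (monomials ?y ?X n)"
    if "j \<in> {1..r}" for j
    using prod_monomials[of "{1..n}" "\<lambda>k \<mu>. mu_val \<mu> j k (t ! (k - 1))", OF _ factor[OF that]]
    by (auto intro: fun_space.span_base)
  then have "(\<Sum>j\<in>{1..r}. (\<lambda>\<mu>. \<Prod>k\<in>{1..n}. mu_val \<mu> j k (t ! (k - 1))))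
      \<in> fun_space.span (monomials ?y ?X n)"
    by (intro fun_space.span_sum)
  moreover have "(\<lambda>\<mu>. sigma_map n d r \<mu> t)
      = (\<Sum>j\<in>{1..r}. (\<lambda>\<mu>. \<Prod>k\<in>{1..n}. mu_val \<mu> j k (t ! (k - 1))))"
    using t by (simp add: sigma_map_def fun_eq_iff sum_fun_apply)
  ultimately show ?thesis by simp
qed

lemma sigma_dim_le:
  assumes "1 \<le> n"
  shows "sigma_dim n d r \<le> int (n * r * card ({1..d} - W)) + int (card (idx_meeting n d W)) - 1"
proof -
  have "zdim (idx_set n d) (sigma_cone n d r) \<le> enat (card (sigma_factor_vars n d r W))"
    unfolding sigma_cone_def
    using sigma_map_coord_in_span[OF assms] range_sigma_map_subset
    by (intro zdim_zclosure_image_le) (auto simp: sigma_factor_vars_def finite_idx_meeting)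
  then have "the_enat (zdim (idx_set n d) (sigma_cone n d r)) \<le> card (sigma_factor_vars n d r W)"
    by (cases "zdim (idx_set n d) (sigma_cone n d r)") auto
  then have "int (the_enat (zdim (idx_set n d) (sigma_cone n d r))) \<le> int (card (sigma_factor_vars n d r W))"
    by (rule of_nat_mono)
  then show ?thesis unfolding sigma_dim_def card_sigma_factor_vars by simp
qed

section \<open>Maximal points of a capped submodular polytope\<close>

definition capped_feasible :: "'a set \<Rightarrow> int \<Rightarrow> ('a set \<Rightarrow> int) \<Rightarrow> ('a \<Rightarrow> int) \<Rightarrow> bool" where
  "capped_feasible D cap f c \<longleftrightarrow> (\<forall>i\<in>D. 0 \<le> c i \<and> c i \<le> cap) \<and> (\<forall>S\<subseteq>D. sum c S \<le> f S)"

definition submodular_on :: "'a set \<Rightarrow> ('a set \<Rightarrow> int) \<Rightarrow> bool" where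
  "submodular_on D f \<longleftrightarrow> (\<forall>A B. A \<subseteq> D \<longrightarrow> B \<subseteq> D \<longrightarrow> f (A \<union> B) + f (A \<inter> B) \<le> f A + f B)"

lemma capped_feasible_tight_union:
  assumes "finite D" "submodular_on D f" "capped_feasible D cap f c"
    and "A \<subseteq> D" "B \<subseteq> D" "sum c A = f A" "sum c B = f B"
  shows "sum c (A \<union> B) = f (A \<union> B)"
proof -
  have "sum c (A \<union> B) + sum c (A \<inter> B) = sum c A + sum c B"
    using finite_subset[OF assms(4,1)] finite_subset[OF assms(5,1)] by (rule sum.union_inter)
  moreover have "A \<union> B \<subseteq> D" "A \<inter> B \<subseteq> D" using assms(4,5) by auto
  then have "sum c (A \<union> B) \<le> f (A \<union> B)" "sum c (A \<inter> B) \<le> f (A \<inter> B)"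
    using assms(3) unfolding capped_feasible_def by blast+
  moreover have "f (A \<union> B) + f (A \<inter> B) \<le> f A + f B"
    using assms(2,4,5) unfolding submodular_on_def by blast
  ultimately show ?thesis using assms(6,7) by linarith
qed

lemma capped_feasible_tight_UN:
  assumes "finite D" "f {} = 0" "submodular_on D f" "capped_feasible D cap f c"
    and "finite J" "\<And>j. j \<in> J \<Longrightarrow> S j \<subseteq> D \<and> sum c (S j) = f (S j)"
  shows "sum c (\<Union>j\<in>J. S j) = f (\<Union>j\<in>J. S j)"
  using assms(5,6)
proof (induction J rule: finite_induct)
  case empty
  show ?case using assms(2) by simp
next
  case (insert j J)
  then show ?case
    using capped_feasible_tight_union[OF assms(1,3,4), of "S j" "\<Union>j\<in>J. S j"] by auto
qed

lemma capped_feasible_increment: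
  assumes "finite D" "capped_feasible D cap f c" "i \<in> D" "c i < cap"
    and untight: "\<And>S. S \<subseteq> D \<Longrightarrow> i \<in> S \<Longrightarrow> sum c S \<noteq> f S"
  shows "capped_feasible D cap f (c(i := c i + 1))"
  unfolding capped_feasible_def
proof (intro conjI ballI allI impI)
  fix j assume "j \<in> D"
  then show "0 \<le> (c(i := c i + 1)) j" "(c(i := c i + 1)) j \<le> cap"
    using assms(2,4) unfolding capped_feasible_def by auto
next
  fix S assume S: "S \<subseteq> D"
  then have "finite S" using assms(1) finite_subset by blast
  have le: "sum c S \<le> f S" using assms(2) S unfolding capped_feasible_def by blast
  show "sum (c(i := c i + 1)) S \<le> f S"
  proof (cases "i \<in> S")
    case True
    then show ?thesis using le untight[OF S] \<open>finite S\<close> by (simp add: sum.remove)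
  next
    case False
    then have "sum (c(i := c i + 1)) S = sum c S" by (intro sum.cong) auto
    then show ?thesis using le by simp
  qed
qed

lemma maximal_capped_feasible_sum:
  assumes D: "finite D" and f: "f {} = 0" "submodular_on D f" and c: "capped_feasible D cap f c"
    and maximal: "\<And>i. i \<in> D \<Longrightarrow> c i < cap \<Longrightarrow> \<not> capped_feasible D cap f (c(i := c i + 1))"
  shows "\<exists>W\<subseteq>D. sum c D = cap * int (card (D - W)) + f W"
proof -
  define J where "J = {i \<in> D. c i < cap}"
  have "\<forall>i\<in>J. \<exists>S. S \<subseteq> D \<and> i \<in> S \<and> sum c S = f S"
  proof (rule ballI, rule ccontr)
    fix i assume i: "i \<in> J" and "\<not> (\<exists>S. S \<subseteq> D \<and> i \<in> S \<and> sum c S = f S)"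
    then have "capped_feasible D cap f (c(i := c i + 1))"
      by (intro capped_feasible_increment[OF D c]) (auto simp: J_def)
    then show False using maximal i by (auto simp: J_def)
  qed
  from bchoice[OF this] obtain S where S: "\<forall>i\<in>J. S i \<subseteq> D \<and> i \<in> S i \<and> sum c (S i) = f (S i)"
    by blast
  define W where "W = (\<Union>i\<in>J. S i)"
  have "W \<subseteq> D" using S by (auto simp: W_def)
  have "sum c W = f W"
    unfolding W_def using D S by (intro capped_feasible_tight_UN[OF D f c]) (auto simp: J_def)
  have "c i = cap" if "i \<in> D - W" for i
  proof -
    have "i \<notin> J" using that S unfolding W_def by blast
    then show ?thesis using that c unfolding capped_feasible_def J_def by force
  qed
  then have "sum c (D - W) = cap * int (card (D - W))" by simp
  moreover have "sum c D = sum c W + sum c (D - W)"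
    using D \<open>W \<subseteq> D\<close> by (metis add.commute sum.subset_diff)
  ultimately show ?thesis using \<open>W \<subseteq> D\<close> \<open>sum c W = f W\<close> by auto
qed

section \<open>The integer linear program\<close>

lemma sum_list_filter_nonzero: "sum_list (filter (\<lambda>x. x \<noteq> 0) (t :: nat list)) = sum_list t"
  by (induction t) auto

lemma finite_partitions_le: "finite (partitions_le n d)"
proof (rule finite_subset)
  show "partitions_le n d \<subseteq> mset ` {xs. set xs \<subseteq> {0..d} \<and> length xs \<le> n}"
  proof
    fix lam assume lam: "lam \<in> partitions_le n d"
    define xs where "xs = sorted_list_of_multiset lam"
    have "mset xs = lam" by (simp add: xs_def)
    moreover have "length xs \<le> n" "sum_list xs = d"
      using lam \<open>mset xs = lam\<close> by (auto simp: partitions_le_def sum_mset_sum_list[symmetric])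
    then have "set xs \<subseteq> {0..d}" by (auto dest: member_le_sum_list)
    ultimately show "lam \<in> mset ` {xs. set xs \<subseteq> {0..d} \<and> length xs \<le> n}"
      using \<open>length xs \<le> n\<close> by blast
  qed
qed (intro finite_imageI finite_lists_length_le, simp)

lemma idx_meeting_eq_UN_N_lam:
  assumes "S \<subseteq> {1..d}"
  shows "idx_meeting n d S = (\<Union>lam\<in>{lam \<in> partitions_le n d. \<exists>p \<in># lam. p \<in> S}. N_lam n d lam)"
proof (intro equalityI subsetI)
  fix t assume t: "t \<in> idx_meeting n d S"
  define lam where "lam = mset (filter (\<lambda>x. x \<noteq> 0) t)"
  have t_idx: "length t = n" "sum_list t = d" and "\<exists>x\<in>set t. x \<in> S"
    using t by (auto simp: idx_meeting_def idx_set_def)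
  have "sum_mset lam = d"
    using t_idx unfolding lam_def sum_mset_sum_list sum_list_filter_nonzero by simp
  moreover have "size lam \<le> n"
    using t_idx length_filter_le[of "\<lambda>x. x \<noteq> 0" t] unfolding lam_def size_mset by simp
  moreover have "\<exists>p\<in>#lam. p \<in> S"
    using \<open>\<exists>x\<in>set t. x \<in> S\<close> assms by (fastforce simp: lam_def)
  ultimately have "lam \<in> {lam \<in> partitions_le n d. \<exists>p \<in># lam. p \<in> S}"
    by (auto simp: partitions_le_def lam_def)
  moreover have "t \<in> N_lam n d lam" using t by (simp add: N_lam_def lam_def idx_meeting_def)
  ultimately show "t \<in> (\<Union>lam\<in>{lam \<in> partitions_le n d. \<exists>p \<in># lam. p \<in> S}. N_lam n d lam)"
    by blast
qed (auto simp: N_lam_def idx_meeting_def)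

lemma sum_card_N_lam_eq:
  assumes "S \<subseteq> {1..d}"
  shows "(\<Sum>lam\<in>{lam \<in> partitions_le n d. \<exists>p \<in># lam. p \<in> S}. int (card (N_lam n d lam)))
    = int (card (idx_meeting n d S))"
proof -
  have "card (\<Union>lam\<in>{lam \<in> partitions_le n d. \<exists>p \<in># lam. p \<in> S}. N_lam n d lam)
      = (\<Sum>lam\<in>{lam \<in> partitions_le n d. \<exists>p \<in># lam. p \<in> S}. card (N_lam n d lam))"
    using finite_partitions_le finite_idx_set
    by (intro card_UN_disjoint) (auto simp: N_lam_def)
  then show ?thesis unfolding idx_meeting_eq_UN_N_lam[OF assms] by simp
qed

lemma ilp_feasible_iff:
  "ilp_feasible n d r c \<longleftrightarrow> (\<forall>i. i \<notin> {1..d} \<longrightarrow> c i = 0) \<and>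
     capped_feasible {1..d} (int (n * r)) (\<lambda>S. int (card (idx_meeting n d S))) c"
  unfolding ilp_feasible_def capped_feasible_def using sum_card_N_lam_eq by (auto simp del: of_nat_sum)

lemma submodular_card_idx_meeting: "submodular_on D (\<lambda>S. int (card (idx_meeting n d S)))"
  unfolding submodular_on_def
proof (intro allI impI)
  fix A B :: "nat set"
  have "card (idx_meeting n d A \<union> idx_meeting n d B) + card (idx_meeting n d A \<inter> idx_meeting n d B)
      = card (idx_meeting n d A) + card (idx_meeting n d B)"
    by (rule card_Un_Int[symmetric]) (auto simp: finite_idx_meeting)
  moreover have "idx_meeting n d (A \<union> B) = idx_meeting n d A \<union> idx_meeting n d B"
    by (auto simp: idx_meeting_def)
  moreover have "card (idx_meeting n d (A \<inter> B)) \<le> card (idx_meeting n d A \<inter> idx_meeting n d B)"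
    using finite_idx_meeting[of n d A] by (intro card_mono) (auto simp: idx_meeting_def)
  ultimately have "card (idx_meeting n d (A \<union> B)) + card (idx_meeting n d (A \<inter> B))
      \<le> card (idx_meeting n d A) + card (idx_meeting n d B)"
    by simp
  then show "int (card (idx_meeting n d (A \<union> B))) + int (card (idx_meeting n d (A \<inter> B)))
      \<le> int (card (idx_meeting n d A)) + int (card (idx_meeting n d B))"
    by linarith
qed

lemma finite_ilp_feasible: "finite {c. ilp_feasible n d r c}"
proof (rule finite_subset)
  show "{c. ilp_feasible n d r c}
      \<subseteq> {c. \<forall>x. (x \<in> {1..d} \<longrightarrow> c x \<in> {0..int (n * r)}) \<and> (x \<notin> {1..d} \<longrightarrow> c x = 0)}"
    by (auto simp: ilp_feasible_def)
qed (rule finite_set_of_finite_funs, auto)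

lemma ilp_opt_witness:
  obtains W where "W \<subseteq> {1..d}"
    "ilp_opt n d r = int (n * r) * int (card ({1..d} - W)) + int (card (idx_meeting n d W)) - 1"
proof -
  let ?values = "{(\<Sum>i=1..d. c i) - 1 | c. ilp_feasible n d r c}"
  have "finite ?values" using finite_ilp_feasible by (simp add: setcompr_eq_image)
  moreover have "ilp_feasible n d r (\<lambda>_. 0)" by (simp add: ilp_feasible_iff capped_feasible_def)
  then have "?values \<noteq> {}" by blast
  ultimately have "ilp_opt n d r \<in> ?values" unfolding ilp_opt_def by (rule Max_in)
  then obtain c where c: "ilp_feasible n d r c" "ilp_opt n d r = (\<Sum>i=1..d. c i) - 1" by blast
  have opt: "(\<Sum>i=1..d. c' i) - 1 \<le> ilp_opt n d r" if "ilp_feasible n d r c'" for c'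
    unfolding ilp_opt_def using \<open>finite ?values\<close> that by (intro Max_ge) auto
  have zero: "\<forall>i. i \<notin> {1..d} \<longrightarrow> c i = 0"
    and feasible: "capped_feasible {1..d} (int (n * r)) (\<lambda>S. int (card (idx_meeting n d S))) c"
    using c(1) unfolding ilp_feasible_iff by blast+
  have "\<not> capped_feasible {1..d} (int (n * r)) (\<lambda>S. int (card (idx_meeting n d S))) (c(i := c i + 1))"
    if "i \<in> {1..d}" for i
  proof
    assume "capped_feasible {1..d} (int (n * r)) (\<lambda>S. int (card (idx_meeting n d S))) (c(i := c i + 1))"
    then have "ilp_feasible n d r (c(i := c i + 1))" using zero that by (simp add: ilp_feasible_iff)
    moreover have "(\<Sum>j=1..d. (c(i := c i + 1)) j) = (\<Sum>j=1..d. c j) + 1"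
      using that by (simp add: sum.remove)
    ultimately show False using opt[of "c(i := c i + 1)"] c(2) by simp
  qed
  moreover have "int (card (idx_meeting n d {})) = 0" by (simp add: idx_meeting_def)
  ultimately obtain W where "W \<subseteq> {1..d}"
    "(\<Sum>i=1..d. c i) = int (n * r) * int (card ({1..d} - W)) + int (card (idx_meeting n d W))"
    using maximal_capped_feasible_sum[OF _ _ submodular_card_idx_meeting feasible] by blast
  then show ?thesis using that c(2) by simp
qed

theorem theorem5p3:
  fixes n d r :: nat
  assumes "n \<ge> 1" and "d \<ge> 1" and "r \<ge> 1"
  shows "sigma_dim n d r \<le> ilp_opt n d r"
proof -
  obtain W where "ilp_opt n d r
      = int (n * r) * int (card ({1..d} - W)) + int (card (idx_meeting n d W)) - 1"
    using ilp_opt_witness by blast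
  with sigma_dim_le[OF assms(1), of d r W] show ?thesis by simp
qed

end
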